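(* There exists $\kappa>0$ such that for every $\omega\in\partial B\setminus\{z=0\}$, $$\gamma(s,\omega)\in\Gamma_{B,\kappa}(\omega)\quad\text{for all }s\in(0,1).$$
   Context: The first Heisenberg group $\mathbb{H}^1$ is $\mathbb{R}^3$ (points $(z,t)$, $z=x+\mathrm{i}y$) with product $(x,y,t)\cdot(x',y',t')=(x+x',y+y',t+t'-2xy'+2yx')$. Korányi norm $\|(z,t)\|=(|z|^4+t^2)^{1/4}$, distance $d(p,q)=\|q^{-1}\cdot p\|$, $d(q,A)=\inf_{a\in A}d(q,a)$, $B=\{q:\|q\|<1\}$. Radial curves: for $\omega=(z,t)\in\partial B$, $z\ne0$, $\gamma(s,\omega)=\big(sz\,e^{-\mathrm{i}\frac{t}{|z|^2}\log s},s^2t\big)$. For $\kappa>0$ and $\omega\in\partial B$, the nontangential region is $\Gamma_{B,\kappa}(\omega)=\{q\in B: d(q,\omega)<(1+\kappa)\,d(q,\partial B)\}$. *)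

theory Defs
  imports "HOL-Analysis.Analysis"
begin

text \<open>First Heisenberg group H^1: points (z,t) with z complex, t real.
  (x,y,t)*(x',y',t') = (x+x', y+y', t+t' - 2xy' + 2yx').\<close>

type_synonym heis = "complex \<times> real"

definition hmult :: "heis \<Rightarrow> heis \<Rightarrow> heis" where
  "hmult p q = (fst p + fst q,
     snd p + snd q - 2 * Re (fst p) * Im (fst q) + 2 * Im (fst p) * Re (fst q))"

definition hinv :: "heis \<Rightarrow> heis" where
  "hinv p = (- fst p, - snd p)"

definition knorm :: "heis \<Rightarrow> real" where
  "knorm p = root 4 (cmod (fst p) ^ 4 + (snd p)^2)"

definition hdist :: "heis \<Rightarrow> heis \<Rightarrow> real" where
  "hdist p q = knorm (hmult (hinv q) p)"

definition hsetdist :: "heis \<Rightarrow> heis set \<Rightarrow> real" where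
  "hsetdist q A = (INF a\<in>A. hdist q a)"

definition hball :: "heis set" where
  "hball = {q. knorm q < 1}"

text \<open>Boundary of B in the Euclidean topology on R^3 = C x R.\<close>
definition hsphere :: "heis set" where
  "hsphere = frontier hball"

definition radial :: "real \<Rightarrow> heis \<Rightarrow> heis" where
  "radial s \<omega> = (s * fst \<omega> * cis (- (snd \<omega> / (cmod (fst \<omega>))^2) * ln s),
                  s^2 * snd \<omega>)"

definition ntregion :: "real \<Rightarrow> heis \<Rightarrow> heis set" where
  "ntregion \<kappa> \<omega> = {q \<in> hball. hdist q \<omega> < (1 + \<kappa>) * hsetdist q hsphere}"

end

theory Submission
  imports Defs
begin

(* Write \<omega> = (z, t), r = |z|^2 and e = 1 - s^2, so that \<gamma>(s, \<omega>) has norm s.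
   The square of the Koranyi norm is the modulus of the Cygan map (z, t) \<mapsto> |z|^2 + i t, which
   is additive under the group law up to the cross term 2 z conj z'.  Hence every point a of the
   unit sphere satisfies 1 \<le> s^2 + \<rho>^2 + 2 s |z| \<rho> with \<rho> = d(\<gamma>(s, \<omega>), a), and this forces
   d(\<gamma>(s, \<omega>), \<partial>B) \<ge> e / (3 sqrt (r + e)).
   On the other side, with \<theta> = -(t / r) log s one has
     d(\<gamma>(s, \<omega>), \<omega>)^4 = (r ((1 - s)^2 + 2 s (1 - cos \<theta>)))^2 + (e t - 2 s r sin \<theta>)^2,
   and the bounds 1 - s \<le> -log s \<le> (1 - s) / s together with 1 - cos \<theta> = O(\<theta>^2) and
   \<theta> - sin \<theta> = O(\<theta>^3) make both terms O(e^2 / (r + e)) uniformly in \<omega> and s.  Thus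
   d(\<gamma>(s, \<omega>), \<omega>) \<le> 6 e / sqrt (r + e), and \<kappa> = 18 works. *)

lemma knorm_nonneg: "0 \<le> knorm p"
  unfolding knorm_def by simp

lemma knorm_pow4: "knorm p ^ 4 = cmod (fst p) ^ 4 + (snd p)^2"
  unfolding knorm_def by (simp add: add_nonneg_nonneg)

lemma norm_fst_le_knorm: "cmod (fst p) \<le> knorm p"
proof -
  have "cmod (fst p) ^ 4 \<le> knorm p ^ 4" by (simp add: knorm_pow4)
  then show ?thesis by (simp add: knorm_nonneg)
qed

lemma knorm_hinv [simp]: "knorm (hinv p) = knorm p"
  by (simp add: knorm_def hinv_def)

definition cygan :: "heis \<Rightarrow> complex" where
  "cygan p = Complex (cmod (fst p) ^ 2) (snd p)"

lemma norm_cygan: "cmod (cygan p) = knorm p ^ 2"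
proof (rule power2_eq_imp_eq)
  show "cmod (cygan p) ^ 2 = (knorm p ^ 2) ^ 2"
    by (simp add: cygan_def complex_norm knorm_pow4 flip: power_mult)
qed (simp_all add: knorm_nonneg)

lemma cygan_hmult: "cygan (hmult p q) = cygan p + cygan q + 2 * fst p * cnj (fst q)"
  by (simp add: cygan_def hmult_def complex_eq_iff cmod_power2) (simp add: power2_eq_square algebra_simps)

lemma knorm_hmult_sq_le:
  "knorm (hmult p q) ^ 2 \<le> knorm p ^ 2 + knorm q ^ 2 + 2 * cmod (fst p) * cmod (fst q)"
proof -
  have "cmod (cygan (hmult p q)) \<le> cmod (cygan p) + cmod (cygan q) + cmod (2 * fst p * cnj (fst q))"
    unfolding cygan_hmult by (metis norm_triangle_le norm_triangle_ineq add_mono order_refl)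
  then show ?thesis by (simp add: norm_cygan norm_mult)
qed

lemma hmult_hinv_hmult_hinv: "hmult q (hinv (hmult (hinv a) q)) = a"
  by (simp add: hmult_def hinv_def prod_eq_iff complex_eq_iff algebra_simps)

lemma knorm_sq_le_hdist:
  "knorm a ^ 2 \<le> knorm q ^ 2 + hdist q a ^ 2 + 2 * cmod (fst q) * hdist q a"
proof -
  define h where "h = hmult (hinv a) q"
  have "knorm a ^ 2 \<le> knorm q ^ 2 + knorm h ^ 2 + 2 * cmod (fst q) * cmod (fst (hinv h))"
    using knorm_hmult_sq_le[of q "hinv h"] by (simp add: h_def hmult_hinv_hmult_hinv)
  also have "cmod (fst (hinv h)) \<le> knorm h"
    using norm_fst_le_knorm[of h] by (simp add: hinv_def)
  finally show ?thesis by (simp add: hdist_def h_def mult_left_mono)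
qed

lemma knorm_hsphere: assumes "a \<in> hsphere" shows "knorm a = 1"
proof -
  have knorm_cont: "continuous_on UNIV knorm"
    unfolding knorm_def by (intro continuous_intros)
  have "open hball"
    unfolding hball_def using open_Collect_less[OF knorm_cont continuous_on_const] by simp
  moreover have "closure hball \<subseteq> {q. knorm q \<le> 1}"
    using closed_Collect_le[OF knorm_cont continuous_on_const]
    by (intro closure_minimal) (auto simp: hball_def)
  ultimately show ?thesis
    using assms unfolding hsphere_def frontier_def by (auto simp: hball_def interior_open)
qed

lemma le_hsetdist_hsphere:
  assumes "hsphere \<noteq> {}" and "\<delta>^2 + 2 * cmod (fst q) * \<delta> \<le> 1 - knorm q ^ 2"
  shows "\<delta> \<le> hsetdist q hsphere"
  unfolding hsetdist_def
proof (rule cINF_greatest[OF assms(1)])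
  fix a assume a: "a \<in> hsphere"
  show "\<delta> \<le> hdist q a"
  proof (rule ccontr)
    assume "\<not> \<delta> \<le> hdist q a"
    then have \<rho>: "0 \<le> hdist q a" "hdist q a < \<delta>" by (auto simp: hdist_def knorm_nonneg)
    have "1 \<le> knorm q ^ 2 + hdist q a ^ 2 + 2 * cmod (fst q) * hdist q a"
      using knorm_sq_le_hdist[of a q] knorm_hsphere[OF a] by simp
    also have "\<dots> < knorm q ^ 2 + \<delta>^2 + 2 * cmod (fst q) * \<delta>"
      using \<rho> by (intro add_less_le_mono add_strict_left_mono power_strict_mono mult_left_mono) auto
    finally show False using assms(2) by linarith
  qed
qed

lemma abs_sub_sin_le_cube: "\<bar>x - sin x\<bar> \<le> \<bar>x\<bar>^3 / 6" for x :: real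
proof -
  have "\<bar>sin x - (\<Sum>m<3. sin_coeff m * x ^ m)\<bar> \<le> inverse (fact 3) * \<bar>x\<bar> ^ 3"
    by (rule Maclaurin_sin_bound)
  moreover have "(\<Sum>m<3. sin_coeff m * x ^ m) = x"
    by (simp add: numeral_3_eq_3 sin_coeff_def lessThan_Suc)
  ultimately show ?thesis by (simp add: abs_minus_commute fact_numeral)
qed

lemma one_minus_cos_le_half_sq: "1 - cos x \<le> x^2 / 2" for x :: real
proof -
  have "1 - cos x = 2 * (sin (x/2))^2"
    using cos_double_sin[of "x/2"] by simp
  also have "\<dots> \<le> 2 * (x/2)^2"
    using abs_sin_x_le_abs_x[of "x/2"] abs_le_square_iff[of "sin (x/2)" "x/2"] by simp
  finally show ?thesis by (simp add: power2_eq_square)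
qed

lemma neg_ln_bounds:
  fixes s :: real
  assumes "0 < s"
  shows "1 - s \<le> - ln s" and "s * - ln s \<le> 1 - s"
proof -
  show "1 - s \<le> - ln s" using ln_le_minus_one[OF assms] by simp
  have "- ln s \<le> 1/s - 1" using ln_le_minus_one[of "1/s"] assms by (simp add: ln_div)
  then show "s * - ln s \<le> 1 - s" using assms by (simp add: field_simps)
qed

lemma weighted_angle_bounds:
  fixes r e \<theta> :: real
  assumes "0 < r" "0 < e" "r * \<bar>\<theta>\<bar> \<le> 2 * e"
  shows "(r + e) * r * (1 - cos \<theta>) \<le> 4 * e^2"
    and "(r + e) * r * \<bar>\<theta> - sin \<theta>\<bar> \<le> 8 * e^2"
proof -
  have r\<theta>: "(r * \<bar>\<theta>\<bar>)^2 \<le> (2 * e)^2"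
    using assms by (intro power_mono) auto
  show "(r + e) * r * (1 - cos \<theta>) \<le> 4 * e^2"
  proof (cases "e \<le> r")
    case True
    have "(r + e) * r * (1 - cos \<theta>) \<le> (2 * r) * r * (\<theta>^2 / 2)"
      using True assms one_minus_cos_le_half_sq[of \<theta>] cos_le_one[of \<theta>]
      by (intro mult_mono) auto
    also have "\<dots> = (r * \<bar>\<theta>\<bar>)^2" by (simp add: power2_eq_square)
    finally show ?thesis using r\<theta> by (simp add: power2_eq_square)
  next
    case False
    have "(r + e) * r * (1 - cos \<theta>) \<le> (2 * e) * e * 2"
      using False assms cos_le_one[of \<theta>] cos_ge_minus_one[of \<theta>]
      by (intro mult_mono) auto
    then show ?thesis by (simp add: power2_eq_square)
  qed
  show "(r + e) * r * \<bar>\<theta> - sin \<theta>\<bar> \<le> 8 * e^2"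
  proof (cases "e \<le> r")
    case True
    have "(r + e) * r * \<bar>\<theta> - sin \<theta>\<bar> \<le> (2 * r) * r * (\<bar>\<theta>\<bar>^3 / 6)"
      using True assms abs_sub_sin_le_cube[of \<theta>] by (intro mult_mono) auto
    also have "\<dots> = (r * \<bar>\<theta>\<bar>)^2 * \<bar>\<theta>\<bar> / 3" by (simp add: power2_eq_square power3_eq_cube)
    also have "\<dots> \<le> (2 * e)^2 * (2 * e / r) / 3"
      using r\<theta> assms by (intro divide_right_mono mult_mono) (auto simp: field_simps)
    also have "\<dots> \<le> (2 * e)^2 * 2 / 3"
      using True assms by (intro divide_right_mono mult_left_mono) (auto simp: field_simps)
    also have "\<dots> \<le> 8 * e^2" by simp
    finally show ?thesis .
  next
    case False
    have "\<bar>\<theta> - sin \<theta>\<bar> \<le> 2 * \<bar>\<theta>\<bar>" using abs_sin_x_le_abs_x[of \<theta>] by linarith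
    then have "r * \<bar>\<theta> - sin \<theta>\<bar> \<le> 2 * (r * \<bar>\<theta>\<bar>)" using assms by simp
    also have "\<dots> \<le> 4 * e" using assms by simp
    finally have "r * \<bar>\<theta> - sin \<theta>\<bar> \<le> 4 * e" .
    then have "(r + e) * (r * \<bar>\<theta> - sin \<theta>\<bar>) \<le> (2 * e) * (4 * e)"
      by (rule mult_mono[rotated]) (use False assms in auto)
    then show ?thesis by (simp add: power2_eq_square mult.assoc)
  qed
qed

(* Here l stands for -ln s (only the bounds of neg_ln_bounds are used) and \<theta>, determined by
   r \<theta> = t l, is the angle of the radial curve; the two displacement bounds below control the
   two terms of hdist_rotated_dilation_pow4, with r = |z|^2. *)
context
  fixes s r t l \<theta> :: real
  assumes s: "0 < s" "s < 1"
    and r: "0 < r" "r \<le> 1"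
    and t: "\<bar>t\<bar> \<le> 1"
    and l: "1 - s \<le> l" "s * l \<le> 1 - s"
    and \<theta>: "r * \<theta> = t * l"
begin

lemma one_minus_sq_bounds: "0 < 1 - s^2" "1 - s^2 \<le> 1" "1 - s \<le> 1 - s^2"
  using s mult_strict_mono[of s 1 s 1] by (auto simp: power2_eq_square)

lemma scaled_angle_le: "r * \<bar>\<theta>\<bar> \<le> l"
proof -
  have "r * \<bar>\<theta>\<bar> = \<bar>t * l\<bar>" using r by (simp add: abs_mult flip: \<theta>)
  also have "\<dots> = \<bar>t\<bar> * l" using l s by (simp add: abs_mult)
  also have "\<dots> \<le> l" using t l s by (intro mult_left_le_one_le) auto
  finally show ?thesis .
qed

lemma angular_terms_le_4:
  assumes "s \<le> 1/2"
  shows "2 * s * ((r + (1 - s^2)) * r * (1 - cos \<theta>)) \<le> 4"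
    and "2 * s * ((r + (1 - s^2)) * r * \<bar>\<theta> - sin \<theta>\<bar>) \<le> 4"
proof -
  define e where "e = 1 - s^2"
  note e = one_minus_sq_bounds[folded e_def]
  have "2 * s * ((r + e) * r * (1 - cos \<theta>)) \<le> 1 * (2 * 1 * 2)"
    using assms s r e cos_le_one[of \<theta>] cos_ge_minus_one[of \<theta>] by (intro mult_mono) auto
  then show "2 * s * ((r + (1 - s^2)) * r * (1 - cos \<theta>)) \<le> 4" by (simp add: e_def)
  have "\<bar>\<theta> - sin \<theta>\<bar> \<le> \<bar>\<theta>\<bar> + 1"
    using abs_triangle_ineq4[of \<theta> "sin \<theta>"] abs_sin_le_one[of \<theta>] by linarith
  then have "r * \<bar>\<theta> - sin \<theta>\<bar> \<le> r * \<bar>\<theta>\<bar> + r"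
    using r mult_left_mono[of "\<bar>\<theta> - sin \<theta>\<bar>" "\<bar>\<theta>\<bar> + 1" r] by (simp add: distrib_left)
  then have "(r + e) * (r * \<bar>\<theta> - sin \<theta>\<bar>) \<le> 2 * (r * \<bar>\<theta>\<bar> + r)"
    using r e by (intro mult_mono) auto
  from mult_left_mono[OF this, of "2 * s"] s
  have "2 * s * ((r + e) * r * \<bar>\<theta> - sin \<theta>\<bar>) \<le> 4 * (s * (r * \<bar>\<theta>\<bar>) + s * r)"
    by (simp add: algebra_simps)
  also have "\<dots> \<le> 4 * ((1 - s) + s)"
  proof -
    have "s * (r * \<bar>\<theta>\<bar>) \<le> s * l" using scaled_angle_le s by (simp add: mult_left_mono)
    moreover have "s * r \<le> s" using r s by simp
    ultimately show ?thesis using l by simp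
  qed
  finally show "2 * s * ((r + (1 - s^2)) * r * \<bar>\<theta> - sin \<theta>\<bar>) \<le> 4" by (simp add: e_def)
qed

lemma l_le_twice_one_minus_sq:
  assumes "1/2 \<le> s"
  shows "l \<le> 2 * (1 - s^2)"
proof -
  have "1 * (1 - s) \<le> (2 * s) * (1 - s)" by (rule mult_right_mono) (use assms s in auto)
  then have "1 - s \<le> s * (2 * (1 - s))" by (simp add: algebra_simps)
  then have "s * l \<le> s * (2 * (1 - s))" using l(2) by linarith
  then show ?thesis using s one_minus_sq_bounds(3) by simp
qed

lemma angular_terms_bound:
  shows "2 * s * ((r + (1 - s^2)) * r * (1 - cos \<theta>)) \<le> 16 * (1 - s^2)^2"
    and "2 * s * ((r + (1 - s^2)) * r * \<bar>\<theta> - sin \<theta>\<bar>) \<le> 16 * (1 - s^2)^2"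
proof -
  define e where "e = 1 - s^2"
  note e = one_minus_sq_bounds[folded e_def]
  consider "s \<le> 1/2" | "1/2 \<le> s" by linarith
  then have "2 * s * ((r + e) * r * (1 - cos \<theta>)) \<le> 16 * e^2
           \<and> 2 * s * ((r + e) * r * \<bar>\<theta> - sin \<theta>\<bar>) \<le> 16 * e^2"
  proof cases
    case 1
    have "1/2 \<le> e" using e 1 by linarith
    then have "(1/2)^2 \<le> e^2" by (rule power_mono) simp
    then show ?thesis using angular_terms_le_4[OF 1, folded e_def] by (simp add: power2_eq_square)
  next
    case 2
    have "r * \<bar>\<theta>\<bar> \<le> 2 * e"
      using scaled_angle_le l_le_twice_one_minus_sq[OF 2] by (simp add: e_def)
    note bounds = weighted_angle_bounds[OF r(1) e(1) this]
    have "2 * s * ((r + e) * r * (1 - cos \<theta>)) \<le> 2 * (4 * e^2)"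
      by (rule mult_mono) (use bounds(1) s r e cos_le_one[of \<theta>] in auto)
    moreover have "2 * s * ((r + e) * r * \<bar>\<theta> - sin \<theta>\<bar>) \<le> 2 * (8 * e^2)"
      by (rule mult_mono) (use bounds(2) s r e in auto)
    ultimately show ?thesis using zero_le_power2[of e] by linarith
  qed
  then show "2 * s * ((r + (1 - s^2)) * r * (1 - cos \<theta>)) \<le> 16 * (1 - s^2)^2"
    and "2 * s * ((r + (1 - s^2)) * r * \<bar>\<theta> - sin \<theta>\<bar>) \<le> 16 * (1 - s^2)^2"
    by (simp_all add: e_def)
qed

lemma dilation_term_bound: "(r + (1 - s^2)) * (1 - s)^2 \<le> 2 * (1 - s^2)^2"
proof -
  have "(1 - s)^2 \<le> (1 - s^2)^2" using s one_minus_sq_bounds(3) by (intro power_mono) auto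
  moreover have "r + (1 - s^2) \<le> 2" using r one_minus_sq_bounds(2) by linarith
  ultimately show ?thesis by (intro mult_mono) auto
qed

lemma horizontal_displacement_bound:
  "(r + (1 - s^2)) * (r * ((1 - s)^2 + 2 * s * (1 - cos \<theta>))) \<le> 18 * (1 - s^2)^2"
proof -
  have "(r + (1 - s^2)) * (r * (1 - s)^2) \<le> (r + (1 - s^2)) * (1 - s)^2"
    using r one_minus_sq_bounds(1) by (intro mult_left_mono mult_left_le_one_le) auto
  then show ?thesis
    using dilation_term_bound angular_terms_bound(1) by (simp add: algebra_simps)
qed

lemma vertical_displacement_bound:
  "(r + (1 - s^2)) * \<bar>(1 - s^2) * t - 2 * s * r * sin \<theta>\<bar> \<le> 18 * (1 - s^2)^2"
proof -
  have "\<bar>(1 - s^2) - 2 * s * l\<bar> \<le> (1 - s)^2" \<comment> \<open>first-order cancellation at s = 1\<close>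
  proof -
    have "s * (1 - s) \<le> s * l" using l s by simp
    then show ?thesis using l by (simp add: abs_le_iff power2_eq_square algebra_simps)
  qed
  then have tD: "\<bar>t * ((1 - s^2) - 2 * s * l)\<bar> \<le> (1 - s)^2"
    unfolding abs_mult using t by (metis abs_ge_zero mult_left_le_one_le order_trans)
  have "(1 - s^2) * t - 2 * s * r * sin \<theta> = t * ((1 - s^2) - 2 * s * l) + 2 * s * (r * (\<theta> - sin \<theta>))"
    using \<theta> by algebra
  then have "\<bar>(1 - s^2) * t - 2 * s * r * sin \<theta>\<bar>
      \<le> \<bar>t * ((1 - s^2) - 2 * s * l)\<bar> + \<bar>2 * s * (r * (\<theta> - sin \<theta>))\<bar>"
    by (simp only: abs_triangle_ineq)
  also have "\<dots> \<le> (1 - s)^2 + 2 * s * (r * \<bar>\<theta> - sin \<theta>\<bar>)"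
    using tD s r by (simp add: abs_mult)
  finally have "(r + (1 - s^2)) * \<bar>(1 - s^2) * t - 2 * s * r * sin \<theta>\<bar>
      \<le> (r + (1 - s^2)) * ((1 - s)^2 + 2 * s * (r * \<bar>\<theta> - sin \<theta>\<bar>))"
    using r one_minus_sq_bounds(1) by (intro mult_left_mono) auto
  then show ?thesis
    using dilation_term_bound angular_terms_bound(2) by (simp add: algebra_simps)
qed

end

lemma norm_fst_radial: "0 \<le> s \<Longrightarrow> cmod (fst (radial s \<omega>)) = s * cmod (fst \<omega>)"
  by (simp add: radial_def norm_mult)

lemma knorm_radial: assumes "0 \<le> s" shows "knorm (radial s \<omega>) = s * knorm \<omega>"
proof (rule power_eq_imp_eq_base)
  show "knorm (radial s \<omega>) ^ 4 = (s * knorm \<omega>) ^ 4"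
    using assms by (simp add: knorm_pow4 norm_fst_radial power_mult_distrib algebra_simps)
      (simp add: radial_def power_mult_distrib flip: power_mult)
qed (use assms in \<open>simp_all add: knorm_nonneg\<close>)

lemma hdist_rotated_dilation_pow4:
  "hdist (of_real s * z * cis \<theta>, s^2 * t) (z, t) ^ 4 =
     (cmod z ^ 2 * ((1 - s)^2 + 2 * s * (1 - cos \<theta>)))^2 + ((1 - s^2) * t - 2 * s * cmod z ^ 2 * sin \<theta>)^2"
proof -
  define w where "w = of_real s * cis \<theta> - 1"
  have "hmult (hinv (z, t)) (of_real s * z * cis \<theta>, s^2 * t) =
      (z * w, - ((1 - s^2) * t - 2 * s * cmod z ^ 2 * sin \<theta>))"
    by (simp add: w_def hmult_def hinv_def algebra_simps cmod_power2) (simp add: power2_eq_square algebra_simps)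
  then have "hdist (of_real s * z * cis \<theta>, s^2 * t) (z, t) ^ 4 =
      (cmod z ^ 2 * cmod w ^ 2)^2 + ((1 - s^2) * t - 2 * s * cmod z ^ 2 * sin \<theta>)^2"
    by (simp add: hdist_def knorm_pow4 norm_mult power_mult_distrib power2_commute flip: power_mult)
  moreover have "cmod w ^ 2 = (1 - s)^2 + 2 * s * (1 - cos \<theta>)"
    using sin_cos_squared_add[of \<theta>] unfolding w_def
    by (simp add: cmod_power2 del: sin_cos_squared_add) algebra
  ultimately show ?thesis by simp
qed

lemma hdist_radial_le:
  assumes \<omega>: "knorm \<omega> = 1" "fst \<omega> \<noteq> 0" and s: "0 < s" "s < 1"
  shows "hdist (radial s \<omega>) \<omega> * sqrt (cmod (fst \<omega>) ^ 2 + (1 - s^2)) \<le> 6 * (1 - s^2)"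
proof -
  obtain z t where \<omega>_eq: "\<omega> = (z, t)" by fastforce
  define r e \<theta> where "r = cmod z ^ 2" and "e = 1 - s^2" and "\<theta> = - (t / r) * ln s"
  define N where "N = hdist (radial s \<omega>) \<omega>"
  have rt: "r^2 + t^2 = 1"
    using \<omega>(1) knorm_pow4[of \<omega>] by (simp add: \<omega>_eq r_def flip: power_mult)
  have "r^2 \<le> 1" "t^2 \<le> 1" using rt zero_le_power2[of r] zero_le_power2[of t] by linarith+
  moreover have "0 < r" using \<omega>(2) by (simp add: \<omega>_eq r_def)
  ultimately have r: "0 < r" "r \<le> 1" and t: "\<bar>t\<bar> \<le> 1" by (simp_all add: abs_square_le_1)
  have r\<theta>: "r * \<theta> = t * - ln s" using r by (simp add: \<theta>_def)
  note H = horizontal_displacement_bound[OF s r t neg_ln_bounds[OF s(1)] r\<theta>, folded e_def]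
  note V = vertical_displacement_bound[OF s r t neg_ln_bounds[OF s(1)] r\<theta>, folded e_def]
  have e: "0 < e" using s by (simp add: e_def abs_square_less_1)
  have "N ^ 4 = (r * ((1 - s)^2 + 2 * s * (1 - cos \<theta>)))^2 + (e * t - 2 * s * r * sin \<theta>)^2"
    using hdist_rotated_dilation_pow4[of s z \<theta> t]
    by (simp add: N_def radial_def \<omega>_eq r_def e_def \<theta>_def)
  then have "(r + e)^2 * N^4 = ((r + e) * (r * ((1 - s)^2 + 2 * s * (1 - cos \<theta>))))^2
      + ((r + e) * \<bar>e * t - 2 * s * r * sin \<theta>\<bar>)^2"
    by (simp only: power_mult_distrib power2_abs) (simp add: algebra_simps)
  also have "\<dots> \<le> (18 * e^2)^2 + (18 * e^2)^2"
    using H V r e s cos_le_one[of \<theta>] by (intro add_mono power_mono) (auto intro!: mult_nonneg_nonneg)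
  also have "\<dots> \<le> (6 * e)^4" by (simp add: power_mult_distrib flip: power_mult)
  finally have "(r + e)^2 * N^4 \<le> (6 * e)^4" .
  moreover have "sqrt (r + e) ^ 4 = (r + e)^2"
  proof -
    have "sqrt (r + e) ^ 4 = (sqrt (r + e) ^ 2) ^ 2" by (simp flip: power_mult)
    then show ?thesis using r e by simp
  qed
  ultimately have "(N * sqrt (r + e))^4 \<le> (6 * e)^4" by (simp add: power_mult_distrib mult.commute)
  then show ?thesis using r e by (simp add: N_def \<omega>_eq r_def e_def hdist_def knorm_nonneg)
qed

lemma hsetdist_radial_ge:
  assumes \<omega>: "\<omega> \<in> hsphere" and s: "0 < s" "s < 1"
  shows "(1 - s^2) / (3 * sqrt (cmod (fst \<omega>) ^ 2 + (1 - s^2))) \<le> hsetdist (radial s \<omega>) hsphere"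
proof -
  define m e where "m = cmod (fst \<omega>)" and "e = 1 - s^2"
  define \<sigma> where "\<sigma> = sqrt (m^2 + e)"
  have e: "0 < e" using s by (simp add: e_def abs_square_less_1)
  have m: "0 \<le> m" "m \<le> \<sigma>" using e by (simp_all add: m_def \<sigma>_def real_le_rsqrt)
  have \<sigma>: "0 < \<sigma>" "\<sigma>^2 = m^2 + e" using e by (simp_all add: \<sigma>_def add_nonneg_pos)
  have "(e / (3 * \<sigma>))^2 \<le> e / 9"
  proof -
    have "(e / (3 * \<sigma>))^2 = e / 9 * (e / (m^2 + e))"
      using \<sigma> by (simp add: power_divide power_mult_distrib) (simp add: power2_eq_square)
    also have "\<dots> \<le> e / 9" using e by (intro mult_left_le) (auto simp: add_nonneg_pos)
    finally show ?thesis .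
  qed
  moreover have "2 * (s * m) * (e / (3 * \<sigma>)) \<le> 2 * e / 3"
  proof -
    have "s * m \<le> \<sigma>" using s m mult_left_le_one_le[of m s] by linarith
    then show ?thesis using e \<sigma> by (simp add: field_simps)
  qed
  ultimately have "(e / (3 * \<sigma>))^2 + 2 * (s * m) * (e / (3 * \<sigma>)) \<le> e"
    using e by linarith
  moreover have "cmod (fst (radial s \<omega>)) = s * m" "1 - knorm (radial s \<omega>) ^ 2 = e"
    using s knorm_hsphere[OF \<omega>] by (simp_all add: norm_fst_radial knorm_radial m_def e_def)
  ultimately have "(e / (3 * \<sigma>))^2 + 2 * cmod (fst (radial s \<omega>)) * (e / (3 * \<sigma>))
      \<le> 1 - knorm (radial s \<omega>) ^ 2"
    by simp
  then show ?thesis using \<omega> by (intro le_hsetdist_hsphere) (auto simp: \<sigma>_def m_def e_def)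
qed

theorem proposition2p6:
  shows "\<exists>\<kappa>>0. \<forall>\<omega>\<in>hsphere. fst \<omega> \<noteq> 0 \<longrightarrow>
           (\<forall>s\<in>{0<..<1}. radial s \<omega> \<in> ntregion \<kappa> \<omega>)"
proof (intro exI[of _ 18] conjI ballI impI)
  fix \<omega> s assume \<omega>: "\<omega> \<in> hsphere" "fst \<omega> \<noteq> 0" and "s \<in> {0<..<(1::real)}"
  then have s: "0 < s" "s < 1" by auto
  define e \<sigma> where "e = 1 - s^2" and "\<sigma> = sqrt (cmod (fst \<omega>) ^ 2 + e)"
  have e: "0 < e" using s by (simp add: e_def abs_square_less_1)
  then have \<sigma>: "0 < \<sigma>" by (simp add: \<sigma>_def add_nonneg_pos)
  have "hdist (radial s \<omega>) \<omega> \<le> 18 * (e / (3 * \<sigma>))"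
    using hdist_radial_le[OF knorm_hsphere[OF \<omega>(1)] \<omega>(2) s] \<sigma>
    by (simp add: e_def \<sigma>_def field_simps)
  also have "\<dots> < 19 * (e / (3 * \<sigma>))" using e \<sigma> by (intro mult_strict_right_mono) auto
  also have "\<dots> \<le> 19 * hsetdist (radial s \<omega>) hsphere"
    using hsetdist_radial_ge[OF \<omega>(1) s] by (simp add: e_def \<sigma>_def del: times_divide_eq_right)
  finally have "hdist (radial s \<omega>) \<omega> < (1 + 18) * hsetdist (radial s \<omega>) hsphere" by simp
  moreover have "radial s \<omega> \<in> hball"
    using s knorm_hsphere[OF \<omega>(1)] by (simp add: hball_def knorm_radial)
  ultimately show "radial s \<omega> \<in> ntregion 18 \<omega>" by (simp add: ntregion_def)
qed simp

end
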